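(* Let $c>0$, $\varepsilon>0$, let $\mathcal{D}$ be a distribution over $\mathbb{R}^k_{\ge0}$ with $\mathrm{BRev}(\mathcal{D})<\infty$, let $M$ be a $c$-expensive mechanism that is oddly-priced or evenly-priced, and let $(X,Q)$ be an $\varepsilon$-representative sequence for $M,\mathcal{D}$. Then \[\mathrm{MenuGap}(X,Q)\ge\frac{\mathrm{Rev}(\mathcal{D},M)}{4(1+\varepsilon)\,\mathrm{BRev}(\mathcal{D})}.\]
   Context: Setting: one seller, one additive buyer, $k$ items; the buyer's value vector $\vec v\in\mathbb{R}^k_{\ge0}$ is drawn from a distribution $\mathcal{D}$. A mechanism $M$ is a set of options $(\vec q,p)$ with $\vec q\in[0,1]^k$, $p\in\mathbb{R}$, always containing the null option $(\vec 0,0)$; a buyer with values $\vec v$ selects an option maximizing $\vec v\cdot\vec q-p$ (ties broken arbitrarily; a maximizer is assumed to exist), and $\vec q^M(\vec v),p^M(\vec v)$ denote the allocation and price of the selected option. $\mathrm{Rev}(\mathcal{D},M)=\mathbb{E}_{\vec v\sim\mathcal{D}}[p^M(\vec v)]$; $\mathrm{BRev}(\mathcal{D})=\sup_{p\ge0} p\cdot\Pr_{\vec v\sim\mathcal{D}}[\sum_i v_i\ge p]$. A mechanism is $c$-expensive if every option other than the null option has price at least $c$; a $c$-expensive mechanism is oddly-priced (resp. evenly-priced) if every non-null option has price in $[c2^i,c2^{i+1})$ for some odd (resp. even) integer $i$. $\varepsilon$-representative sequence for $M,\mathcal{D}$: set $\vec q_0=\vec 0$; let $a=1$ if $M$ is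 oddly-priced and $a=0$ if evenly-priced; for $j\in\mathbb{N}_+$ let $B_j:=\{\vec v\in\mathrm{supp}(\mathcal{D}): p^M(\vec v)\in[c2^{2(j-1)+a},c2^{2(j-1)+a+1})\}$; for each $j$ with $B_j\neq\emptyset$ pick $\vec x_j\in B_j$ with $\|\vec x_j\|_1\le(1+\varepsilon)\|\vec v\|_1$ for all $\vec v\in B_j$, and set $\vec q_j:=\vec q^M(\vec x_j)$; indices $j$ with $B_j=\emptyset$ are omitted (later indices shifted down). $X=(\vec x_j)_{j\ge1}$, $Q=(\vec q_j)_{j\ge0}$. MenuGap: for a sequence $X=(\vec x_i)_{i=1}^N$ of nonzero points of $\mathbb{R}^k_{\ge0}$ and $Q=(\vec q_i)_{i=0}^N\subset[0,1]^k$ with $\vec q_0=\vec0$, $\mathrm{gap}_i^{X,Q}:=\min_{0\le j<i}(\vec q_i-\vec q_j)\cdot\vec x_i$ and $\mathrm{MenuGap}(X,Q):=\sum_{i=1}^N \mathrm{gap}_i^{X,Q}/\|\vec x_i\|_1$. *)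

theory Defs
  imports "HOL-Probability.Probability"
begin

type_synonym ('k) option_t = "(real ^ 'k) \<times> real"   (* (allocation q, price p) *)

definition norm1 :: "real ^ 'k::finite \<Rightarrow> real" where
  "norm1 v = (\<Sum>i\<in>UNIV. \<bar>v $ i\<bar>)"

definition nonneg_distribution :: "(real ^ 'k::finite) measure \<Rightarrow> bool" where
  "nonneg_distribution D \<longleftrightarrow> prob_space D \<and> sets D = sets borel \<and>
     (AE v in D. \<forall>i. 0 \<le> v $ i)"

definition dist_supp :: "(real ^ 'k::finite) measure \<Rightarrow> (real ^ 'k) set" where
  "dist_supp D = {v. \<forall>e>0. 0 < measure D (ball v e)}"

definition BRev :: "(real ^ 'k::finite) measure \<Rightarrow> ereal" where
  "BRev D = (SUP p\<in>{0::real..}. ereal (p * measure D {v \<in> space D. (\<Sum>i\<in>UNIV. v $ i) \<ge> p}))"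

definition is_mechanism :: "'k::finite option_t set \<Rightarrow> bool" where
  "is_mechanism M \<longleftrightarrow> (0, 0) \<in> M \<and> (\<forall>(q, p)\<in>M. \<forall>i. 0 \<le> q $ i \<and> q $ i \<le> 1)"

definition utility :: "real ^ 'k::finite \<Rightarrow> 'k option_t \<Rightarrow> real" where
  "utility v o' = v \<bullet> fst o' - snd o'"

definition is_selection :: "'k::finite option_t set \<Rightarrow> (real ^ 'k) set \<Rightarrow> (real ^ 'k \<Rightarrow> 'k option_t) \<Rightarrow> bool" where
  "is_selection M S sel \<longleftrightarrow> (\<forall>v\<in>S. sel v \<in> M \<and> (\<forall>o'\<in>M. utility v o' \<le> utility v (sel v)))"

definition Rev :: "(real ^ 'k::finite) measure \<Rightarrow> (real ^ 'k \<Rightarrow> 'k option_t) \<Rightarrow> ereal" where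
  "Rev D sel = enn2ereal (\<integral>\<^sup>+ v. ennreal (snd (sel v)) \<partial>D)"

definition c_expensive :: "real \<Rightarrow> 'k::finite option_t set \<Rightarrow> bool" where
  "c_expensive c M \<longleftrightarrow> (\<forall>(q, p)\<in>M. (q, p) \<noteq> (0, 0) \<longrightarrow> c \<le> p)"

definition oddly_priced :: "real \<Rightarrow> 'k::finite option_t set \<Rightarrow> bool" where
  "oddly_priced c M \<longleftrightarrow> c_expensive c M \<and>
     (\<forall>(q, p)\<in>M. (q, p) \<noteq> (0, 0) \<longrightarrow>
        (\<exists>i::int. odd i \<and> c * 2 powr i \<le> p \<and> p < c * 2 powr (i + 1)))"

definition evenly_priced :: "real \<Rightarrow> 'k::finite option_t set \<Rightarrow> bool" where
  "evenly_priced c M \<longleftrightarrow> c_expensive c M \<and>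
     (\<forall>(q, p)\<in>M. (q, p) \<noteq> (0, 0) \<longrightarrow>
        (\<exists>i::int. even i \<and> c * 2 powr i \<le> p \<and> p < c * 2 powr (i + 1)))"

definition bucket :: "real \<Rightarrow> nat \<Rightarrow> (real ^ 'k::finite) measure \<Rightarrow> (real ^ 'k \<Rightarrow> 'k option_t)
    \<Rightarrow> nat \<Rightarrow> (real ^ 'k) set" where
  "bucket c a D sel j = {v \<in> dist_supp D.
      c * 2 powr (real (2 * (j - 1) + a)) \<le> snd (sel v) \<and>
      snd (sel v) < c * 2 powr (real (2 * (j - 1) + a + 1))}"

definition idx :: "enat \<Rightarrow> nat set" where
  "idx N = {i. 1 \<le> i \<and> enat i \<le> N}"

text \<open>The nonempty buckets B_j, j \<ge> 1, are enumerated in increasing order by e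
  (this is the "omit empty buckets and shift indices down" step).\<close>
definition representative ::
  "real \<Rightarrow> real \<Rightarrow> (real ^ 'k::finite) measure \<Rightarrow> 'k option_t set \<Rightarrow> (real ^ 'k \<Rightarrow> 'k option_t)
    \<Rightarrow> (nat \<Rightarrow> real ^ 'k) \<Rightarrow> (nat \<Rightarrow> real ^ 'k) \<Rightarrow> enat \<Rightarrow> bool" where
  "representative c \<epsilon> D M sel X Q N \<longleftrightarrow>
     (\<exists>a::nat. ((a = 1 \<and> oddly_priced c M) \<or> (a = 0 \<and> evenly_priced c M)) \<and>
       (\<exists>e::nat \<Rightarrow> nat. strict_mono_on (idx N) e \<and>
          e ` idx N = {j. 1 \<le> j \<and> bucket c a D sel j \<noteq> {}} \<and>
          Q 0 = 0 \<and>
          (\<forall>i\<in>idx N. X i \<in> bucket c a D sel (e i) \<and>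
              (\<forall>v\<in>bucket c a D sel (e i). norm1 (X i) \<le> (1 + \<epsilon>) * norm1 v) \<and>
              Q i = fst (sel (X i)))))"

definition gap :: "(nat \<Rightarrow> real ^ 'k::finite) \<Rightarrow> (nat \<Rightarrow> real ^ 'k) \<Rightarrow> nat \<Rightarrow> real" where
  "gap X Q i = Min ((\<lambda>j. (Q i - Q j) \<bullet> X i) ` {..<i})"

definition MenuGap :: "(nat \<Rightarrow> real ^ 'k::finite) \<Rightarrow> (nat \<Rightarrow> real ^ 'k) \<Rightarrow> enat \<Rightarrow> ereal" where
  "MenuGap X Q N = (case N of
       enat n \<Rightarrow> ereal (\<Sum>i=1..n. gap X Q i / norm1 (X i))
     | \<infinity> \<Rightarrow> (\<Sum>i. ereal (gap X Q (Suc i) / norm1 (X (Suc i)))))"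

end

theory Submission
  imports Defs
begin

text \<open>A buyer in bucket \<open>B\<^sub>j\<close> pays at least \<open>L\<^sub>j\<close>, while every buyer of an earlier nonempty
  bucket pays less than \<open>L\<^sub>j/2\<close>, because consecutive buckets of one parity are a factor 4
  apart. Incentive compatibility of the representative \<open>x\<^sub>j\<close> against the options of earlier
  representatives (and against the null option) therefore gives \<open>gap\<^sub>j \<ge> L\<^sub>j/2\<close>. On the other
  hand every buyer in \<open>B\<^sub>j\<close> has total value at least \<open>\<parallel>x\<^sub>j\<parallel>\<^sub>1/(1+\<epsilon>)\<close>, so selling the grand
  bundle at that price shows \<open>Pr[B\<^sub>j] \<le> (1+\<epsilon>) BRev / \<parallel>x\<^sub>j\<parallel>\<^sub>1\<close>. Bucket \<open>B\<^sub>j\<close> contributes at most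
  \<open>2 L\<^sub>j Pr[B\<^sub>j] \<le> 4 (1+\<epsilon>) BRev gap\<^sub>j / \<parallel>x\<^sub>j\<parallel>\<^sub>1\<close> to the revenue; summing over the buckets gives
  the claim.\<close>

lemma space_nonneg_distribution: "nonneg_distribution D \<Longrightarrow> space D = UNIV"
  unfolding nonneg_distribution_def by (metis sets_eq_imp_space_eq space_borel)

lemma dist_supp_nonneg:
  fixes D :: "(real ^ 'k::finite) measure"
  assumes D: "nonneg_distribution D" and v: "v \<in> dist_supp D"
  shows "0 \<le> v $ i"
proof (rule ccontr)
  assume "\<not> 0 \<le> v $ i"
  define r where "r = - v $ i"
  have r: "0 < r" using \<open>\<not> 0 \<le> v $ i\<close> by (simp add: r_def)
  have "AE w in D. \<forall>i. 0 \<le> w $ i" using D unfolding nonneg_distribution_def by blast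
  hence "AE w in D. w \<notin> ball v r"
  proof eventually_elim
    case (elim w)
    have "\<bar>(w - v) $ i\<bar> \<le> norm (w - v)" by (rule component_le_norm_cart)
    thus ?case using elim[rule_format, of i] by (auto simp: r_def dist_norm norm_minus_commute)
  qed
  hence "emeasure D (ball v r) = 0"
    using AE_iff_measurable[of "ball v r" D] D space_nonneg_distribution[OF D]
    unfolding nonneg_distribution_def by (auto simp: ball_def)
  hence "measure D (ball v r) = 0" by (simp add: measure_def)
  with v r show False unfolding dist_supp_def by fastforce
qed

text \<open>The complement of the support is covered by countably many null balls (Lindelof).\<close>
lemma AE_in_dist_supp:
  fixes D :: "(real ^ 'k::finite) measure"
  assumes fin: "finite_measure D" and sets: "sets D = sets borel"
  shows "AE v in D. v \<in> dist_supp D"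
proof -
  define F where "F = {ball v r | v r. 0 < r \<and> measure D (ball v r) = 0}"
  obtain F' where F': "F' \<subseteq> F" "countable F'" "\<Union>F' = \<Union>F"
    using Lindelof[of F] unfolding F_def by blast
  have "S \<in> null_sets D" if "S \<in> F" for S
    using that sets fin by (auto simp: F_def finite_measure.emeasure_eq_measure)
  hence "\<Union>(id ` F') \<in> null_sets D" using F' by (intro null_sets_UN') auto
  moreover have "{v \<in> space D. v \<notin> dist_supp D} \<subseteq> \<Union>F'"
  proof
    fix v assume "v \<in> {v \<in> space D. v \<notin> dist_supp D}"
    then obtain r where "0 < r" "\<not> 0 < measure D (ball v r)" unfolding dist_supp_def by auto
    hence "ball v r \<in> F" "v \<in> ball v r"
      using measure_nonneg[of D "ball v r"] unfolding F_def by auto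
    thus "v \<in> \<Union>F'" using F' by blast
  qed
  ultimately show ?thesis by (intro AE_I) auto
qed

lemma BRev_nonneg: "0 \<le> BRev D"
  unfolding BRev_def by (rule SUP_upper2[of 0]) auto

lemma measure_value_ge_le_BRev:
  assumes "BRev D = ereal B" and "0 < p"
  shows "measure D {v \<in> space D. p \<le> (\<Sum>i\<in>UNIV. v $ i)} \<le> B / p"
proof -
  have "ereal (p * measure D {v \<in> space D. p \<le> (\<Sum>i\<in>UNIV. v $ i)}) \<le> BRev D"
    unfolding BRev_def by (rule SUP_upper) (use assms in simp)
  thus ?thesis using assms by (simp add: le_divide_eq mult.commute)
qed

lemma norm1_eq_sum: "(\<And>i. 0 \<le> v $ i) \<Longrightarrow> norm1 v = (\<Sum>i\<in>UNIV. v $ i)"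
  unfolding norm1_def by simp

lemma norm1_pos:
  assumes "v \<noteq> 0"
  shows "0 < norm1 v"
proof -
  obtain i where "v $ i \<noteq> 0" using assms by (auto simp: vec_eq_iff)
  hence "0 < \<bar>v $ i\<bar>" by simp
  also have "\<dots> \<le> norm1 v"
    unfolding norm1_def by (rule member_le_sum) auto
  finally show ?thesis .
qed

lemma selection_utility_ge:
  "is_selection M S sel \<Longrightarrow> v \<in> S \<Longrightarrow> opt \<in> M \<Longrightarrow>
    v \<bullet> fst opt - snd opt \<le> v \<bullet> fst (sel v) - snd (sel v)"
  unfolding is_selection_def utility_def by blast

lemma selection_price_at_zero:
  assumes "is_selection M S sel" and "(0, 0) \<in> M" and "0 \<in> S"
  shows "snd (sel 0) \<le> 0"
  using selection_utility_ge[OF assms(1,3,2)] by simp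

lemma gap_ge_price_increase:
  assumes sel: "is_selection M S sel" and null: "(0, 0) \<in> M" and "1 \<le> i"
    and X: "\<And>j. 1 \<le> j \<Longrightarrow> j \<le> i \<Longrightarrow> X j \<in> S \<and> Q j = fst (sel (X j))"
    and Q0: "Q 0 = 0"
    and d_le: "d \<le> snd (sel (X i))"
    and d_increase: "\<And>j. 1 \<le> j \<Longrightarrow> j < i \<Longrightarrow> snd (sel (X j)) + d \<le> snd (sel (X i))"
  shows "d \<le> gap X Q i"
  unfolding gap_def
proof (rule Min.boundedI)
  show "(\<lambda>j. (Q i - Q j) \<bullet> X i) ` {..<i} \<noteq> {}"
    using \<open>1 \<le> i\<close> by (simp add: lessThan_empty_iff)
next
  have Xi: "X i \<in> S" "Q i = fst (sel (X i))" using X[of i] \<open>1 \<le> i\<close> by auto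
  have "d \<le> (Q i - Q j) \<bullet> X i" if "j < i" for j
  proof (cases "j = 0")
    case True
    show ?thesis
      using selection_utility_ge[OF sel Xi(1) null] d_le Xi(2) True Q0 by (simp add: inner_commute)
  next
    case False
    hence Xj: "X j \<in> S" "Q j = fst (sel (X j))" using X[of j] that by auto
    have "X i \<bullet> Q j - snd (sel (X j)) \<le> X i \<bullet> Q i - snd (sel (X i))"
      using selection_utility_ge[OF sel Xi(1)] sel Xj Xi(2) unfolding is_selection_def by auto
    thus ?thesis using d_increase[of j] False that
      by (simp add: inner_commute inner_diff_right)
  qed
  thus "\<And>g. g \<in> (\<lambda>j. (Q i - Q j) \<bullet> X i) ` {..<i} \<Longrightarrow> d \<le> g" by auto
qed simp

text \<open>Bucket \<open>Suc m\<close> consists of the types paying a price in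
  \<open>[price_floor c a m, 2 * price_floor c a m)\<close>; indexing by \<open>m = j - 1\<close> avoids the truncated
  subtraction in the definition of \<open>bucket\<close>.\<close>
definition price_floor :: "real \<Rightarrow> nat \<Rightarrow> nat \<Rightarrow> real" where
  "price_floor c a m = c * 2 powr real (2 * m + a)"

lemma price_floor_pos: "0 < c \<Longrightarrow> 0 < price_floor c a m"
  unfolding price_floor_def by simp

lemma price_floor_increase:
  assumes "0 < c" and "m' < m"
  shows "4 * price_floor c a m' \<le> price_floor c a m"
proof -
  have "4 * price_floor c a m' = c * 2 powr real (2 * m' + a + 2)"
    unfolding price_floor_def by (simp add: powr_add)
  also have "\<dots> \<le> price_floor c a m"
    unfolding price_floor_def using assms by (intro mult_left_mono powr_mono) auto
  finally show ?thesis .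
qed

lemma bucket_Suc:
  "bucket c a D sel (Suc m) =
    {v \<in> dist_supp D. price_floor c a m \<le> snd (sel v) \<and> snd (sel v) < 2 * price_floor c a m}"
  unfolding bucket_def price_floor_def by (simp add: powr_add add.assoc mult.left_commute)

lemma parity_priced_option:
  assumes "(a = 1 \<and> oddly_priced c M) \<or> (a = 0 \<and> evenly_priced c M)"
    and "(q, p) \<in> M" and "(q, p) \<noteq> (0, 0)"
  obtains i :: int where "i mod 2 = int a" "c * 2 powr i \<le> p" "p < c * 2 powr (i + 1)"
  using assms unfolding oddly_priced_def evenly_priced_def
  by (fastforce simp: odd_iff_mod_2_eq_one even_iff_mod_2_eq_zero)

lemma option_price_in_band:
  assumes c: "0 < c" and parity: "(a = 1 \<and> oddly_priced c M) \<or> (a = 0 \<and> evenly_priced c M)"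
    and opt: "(q, p) \<in> M" "(q, p) \<noteq> (0, 0)"
  obtains m where "price_floor c a m \<le> p" "p < 2 * price_floor c a m"
proof -
  obtain i :: int where i: "i mod 2 = int a" "c * 2 powr i \<le> p" "p < c * 2 powr (i + 1)"
    using parity_priced_option[OF parity opt] .
  have "c_expensive c M" using parity unfolding oddly_priced_def evenly_priced_def by blast
  hence "c \<le> p" using opt unfolding c_expensive_def by blast
  have "0 \<le> i"
  proof (rule ccontr)
    assume "\<not> 0 \<le> i"
    hence "c * 2 powr (i + 1) \<le> c * 2 powr 0" using c by (intro mult_left_mono powr_mono) auto
    thus False using i(3) \<open>c \<le> p\<close> by simp
  qed
  hence "int (2 * nat (i div 2) + a) = i"
    by (simp flip: i(1))
  hence "real (2 * nat (i div 2) + a) = real_of_int i"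
    by (metis of_int_of_nat_eq)
  hence "price_floor c a (nat (i div 2)) = c * 2 powr i"
    by (simp only: price_floor_def)
  with i show ?thesis
    by (intro that[of "nat (i div 2)"]) (simp_all add: powr_add)
qed

lemma nn_integral_le_suminf_cover:
  fixes f :: "'a \<Rightarrow> real"
  assumes [measurable]: "f \<in> borel_measurable M" "\<And>i. S i \<in> sets M"
    and bound: "\<And>i x. x \<in> S i \<Longrightarrow> f x \<le> b i"
    and cover: "AE x in M. 0 < f x \<longrightarrow> (\<exists>i. x \<in> S i)"
  shows "(\<integral>\<^sup>+x. ennreal (f x) \<partial>M) \<le> (\<Sum>i. ennreal (b i) * emeasure M (S i))"
proof -
  have "(\<integral>\<^sup>+x. ennreal (f x) \<partial>M) \<le> (\<integral>\<^sup>+x. (\<Sum>i. indicator (S i) x * ennreal (f x)) \<partial>M)"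
    using cover
  proof (intro nn_integral_mono_AE, eventually_elim)
    case (elim x)
    show ?case
    proof (cases "0 < f x")
      case True
      then obtain i where "x \<in> S i" using elim by blast
      hence "ennreal (f x) = (\<Sum>j\<in>{i}. indicator (S j) x * ennreal (f x))" by simp
      also have "\<dots> \<le> (\<Sum>j. indicator (S j) x * ennreal (f x))"
        by (intro sum_le_suminf summableI) auto
      finally show ?thesis .
    qed (simp add: ennreal_neg)
  qed
  also have "\<dots> = (\<Sum>i. \<integral>\<^sup>+x. indicator (S i) x * ennreal (f x) \<partial>M)"
    by (rule nn_integral_suminf) measurable
  also have "\<dots> \<le> (\<Sum>i. \<integral>\<^sup>+x. ennreal (b i) * indicator (S i) x \<partial>M)"
    by (intro suminf_le summableI nn_integral_mono) (auto simp: indicator_def bound ennreal_leI)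
  also have "\<dots> = (\<Sum>i. ennreal (b i) * emeasure M (S i))"
    by (simp add: nn_integral_cmult_indicator)
  finally show ?thesis .
qed

lemma MenuGap_eq_suminf_ennreal:
  assumes "\<And>i. i \<in> idx N \<Longrightarrow> 0 \<le> gap X Q i / norm1 (X i)"
  shows "MenuGap X Q N = enn2ereal
    (\<Sum>i. if Suc i \<in> idx N then ennreal (gap X Q (Suc i) / norm1 (X (Suc i))) else 0)"
    (is "_ = enn2ereal (\<Sum>i. ?s i)")
proof (cases N)
  case (enat n)
  define t where "t i = gap X Q i / norm1 (X i)" for i
  have t_nonneg: "0 \<le> t (Suc i)" if "i < n" for i
    using assms[of "Suc i"] that by (simp add: idx_def enat t_def)
  have "(\<Sum>i. ?s i) = (\<Sum>i<n. ennreal (t (Suc i)))"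
    by (subst suminf_finite[of "{..<n}"]) (auto simp: idx_def enat t_def)
  also have "\<dots> = ennreal (\<Sum>i<n. t (Suc i))"
    using t_nonneg by (intro sum_ennreal) auto
  moreover have "0 \<le> (\<Sum>i<n. t (Suc i))"
    using t_nonneg by (intro sum_nonneg) auto
  ultimately have "enn2ereal (\<Sum>i. ?s i) = ereal (\<Sum>i<n. t (Suc i))"
    by (simp add: enn2ereal_ennreal)
  moreover have "(\<Sum>i<n. t (Suc i)) = (\<Sum>i=1..n. t i)"
    using sum.atLeast1_atMost_eq[of t n] by simp
  ultimately show ?thesis unfolding MenuGap_def enat t_def by simp
next
  case infinity
  have "MenuGap X Q N = (\<Sum>i. enn2ereal (?s i))"
    using assms by (simp add: MenuGap_def infinity idx_def)
  also have "\<dots> = enn2ereal (\<Sum>i. ?s i)" by (simp add: suminf_enn2ereal)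
  finally show ?thesis .
qed

text \<open>For \<open>B = 0\<close> the left-hand side is \<open>0 / 0\<close>, which is \<open>0\<close> in \<open>ereal\<close>.\<close>
lemma ereal_divide_le_of_ennreal:
  assumes "R \<le> ennreal (4 * (1 + \<epsilon>) * B) * S" and "0 \<le> B" and "0 < \<epsilon>"
  shows "enn2ereal R / (4 * (1 + ereal \<epsilon>) * ereal B) \<le> enn2ereal S"
proof (cases "B = 0")
  case True
  thus ?thesis using assms(1) by (simp add: enn2ereal_nonneg zero_ennreal.rep_eq)
next
  case False
  hence K: "0 < 4 * (1 + \<epsilon>) * B" using assms(2,3) by simp
  have "4 * (1 + ereal \<epsilon>) * ereal B = ereal (4 * (1 + \<epsilon>) * B)" by simp
  moreover have "enn2ereal R \<le> ereal (4 * (1 + \<epsilon>) * B) * enn2ereal S"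
    using assms(1) K by (simp add: less_eq_ennreal.rep_eq times_ennreal.rep_eq enn2ereal_ennreal)
  ultimately show ?thesis
    using K by (simp only:) (intro ereal_divide_le_posI, auto simp: enn2ereal_nonneg)
qed

locale representative_sequence =
  fixes c \<epsilon> :: real and D :: "(real ^ 'k::finite) measure"
    and M :: "'k option_t set" and sel :: "real ^ 'k \<Rightarrow> 'k option_t"
    and X Q :: "nat \<Rightarrow> real ^ 'k" and N :: enat and a :: nat and e :: "nat \<Rightarrow> nat"
  assumes c_pos: "0 < c" and eps_pos: "0 < \<epsilon>"
    and nonneg_D: "nonneg_distribution D"
    and mechanism: "is_mechanism M"
    and selection: "is_selection M {v. \<forall>i. 0 \<le> v $ i} sel"
    and price_measurable: "(\<lambda>v. snd (sel v)) \<in> borel_measurable D"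
    and parity: "(a = 1 \<and> oddly_priced c M) \<or> (a = 0 \<and> evenly_priced c M)"
    and e_mono: "strict_mono_on (idx N) e"
    and e_image: "e ` idx N = {j. 1 \<le> j \<and> bucket c a D sel j \<noteq> {}}"
    and Q_0: "Q 0 = 0"
    and X_bucket: "i \<in> idx N \<Longrightarrow> X i \<in> bucket c a D sel (e i)"
    and X_min_norm: "i \<in> idx N \<Longrightarrow> v \<in> bucket c a D sel (e i) \<Longrightarrow> norm1 (X i) \<le> (1 + \<epsilon>) * norm1 v"
    and Q_X: "i \<in> idx N \<Longrightarrow> Q i = fst (sel (X i))"
begin

abbreviation price :: "real ^ 'k \<Rightarrow> real" where
  "price v \<equiv> snd (sel v)"

text \<open>Since \<open>e i \<ge> 1\<close>, bucket \<open>e i\<close> is the band of \<open>price_floor c a (e i - 1)\<close>.\<close>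
definition floor_price :: "nat \<Rightarrow> real" where
  "floor_price i = price_floor c a (e i - 1)"

lemma floor_price_pos: "0 < floor_price i"
  unfolding floor_price_def using c_pos by (rule price_floor_pos)

definition band :: "nat \<Rightarrow> (real ^ 'k) set" where
  "band i = {v \<in> space D. floor_price i \<le> price v \<and> price v < 2 * floor_price i}"

lemma band_measurable [measurable]: "band i \<in> sets D"
  using price_measurable unfolding band_def by measurable

lemma sets_D: "sets D = sets borel"
  using nonneg_D unfolding nonneg_distribution_def by blast

lemma finite_measure_D: "finite_measure D"
  using nonneg_D unfolding nonneg_distribution_def by (blast intro: prob_space.finite_measure)

lemma AE_supp: "AE v in D. v \<in> dist_supp D"
  using AE_in_dist_supp[OF finite_measure_D sets_D] .

lemma supp_nonneg: "v \<in> dist_supp D \<Longrightarrow> v \<in> {v. \<forall>i. 0 \<le> v $ i}"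
  using dist_supp_nonneg[OF nonneg_D] by blast

lemma idx_ge_1: "i \<in> idx N \<Longrightarrow> 1 \<le> i"
  unfolding idx_def by simp

lemma idx_downward_closed: "i \<in> idx N \<Longrightarrow> 1 \<le> j \<Longrightarrow> j \<le> i \<Longrightarrow> j \<in> idx N"
  unfolding idx_def by (auto intro: order_trans[of _ "enat i"])

lemma bucket_eq_band: "i \<in> idx N \<Longrightarrow> bucket c a D sel (e i) = band i \<inter> dist_supp D"
proof -
  assume "i \<in> idx N"
  hence "1 \<le> e i" using e_image by blast
  hence "e i = Suc (e i - 1)" by simp
  thus ?thesis
    using bucket_Suc[of c a D sel "e i - 1"] space_nonneg_distribution[OF nonneg_D]
    unfolding band_def floor_price_def by auto
qed

lemma X_in_band: "i \<in> idx N \<Longrightarrow> X i \<in> band i \<and> X i \<in> dist_supp D"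
  using X_bucket bucket_eq_band by blast

lemma gap_ge_floor_price:
  assumes i: "i \<in> idx N"
  shows "floor_price i / 2 \<le> gap X Q i"
proof (rule gap_ge_price_increase[OF selection])
  show "(0, 0) \<in> M" using mechanism unfolding is_mechanism_def by blast
  show "floor_price i / 2 \<le> price (X i)" using X_in_band[OF i] unfolding band_def by simp
  show "1 \<le> i" using idx_ge_1[OF i] .
  show "Q 0 = 0" by (rule Q_0)
  show "X j \<in> {v. \<forall>i. 0 \<le> v $ i} \<and> Q j = fst (sel (X j))" if "1 \<le> j" "j \<le> i" for j
    using idx_downward_closed[OF i that] X_in_band supp_nonneg Q_X by blast
next
  fix j assume j: "1 \<le> j" "j < i"
  hence j_idx: "j \<in> idx N" using idx_downward_closed[OF i] by simp
  have "1 \<le> e j" using e_image j_idx by blast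
  moreover have "e j < e i" using e_mono j_idx i j(2) unfolding strict_mono_on_def by blast
  ultimately have "4 * floor_price j \<le> floor_price i"
    unfolding floor_price_def using c_pos by (intro price_floor_increase) auto
  thus "price (X j) + floor_price i / 2 \<le> price (X i)"
    using X_in_band[OF i] X_in_band[OF j_idx] unfolding band_def by simp
qed

lemma norm1_X_pos:
  assumes i: "i \<in> idx N"
  shows "0 < norm1 (X i)"
proof (rule norm1_pos, rule notI)
  assume "X i = 0"
  moreover have "price 0 \<le> 0"
    using selection_price_at_zero[OF selection] mechanism unfolding is_mechanism_def by simp
  ultimately show False using X_in_band[OF i] floor_price_pos[of i] unfolding band_def by simp
qed

lemma gap_ratio_nonneg: "i \<in> idx N \<Longrightarrow> 0 \<le> gap X Q i / norm1 (X i)"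
  using gap_ge_floor_price[of i] norm1_X_pos[of i] floor_price_pos[of i] by simp

lemma band_revenue_le:
  assumes BRev: "BRev D = ereal B" and i: "i \<in> idx N"
  shows "2 * floor_price i * measure D (band i) \<le> 4 * (1 + \<epsilon>) * B * (gap X Q i / norm1 (X i))"
proof -
  define p where "p = norm1 (X i) / (1 + \<epsilon>)"
  have p_pos: "0 < p" unfolding p_def using norm1_X_pos[OF i] eps_pos by simp
  have "AE v in D. v \<in> band i \<longrightarrow> v \<in> {v \<in> space D. p \<le> (\<Sum>k\<in>UNIV. v $ k)}"
    using AE_supp
  proof eventually_elim
    case (elim v)
    show ?case
    proof
      assume "v \<in> band i"
      hence "norm1 (X i) \<le> (1 + \<epsilon>) * norm1 v"
        using X_min_norm[OF i] bucket_eq_band[OF i] elim by blast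
      moreover have "norm1 v = (\<Sum>k\<in>UNIV. v $ k)" using supp_nonneg[OF elim] by (simp add: norm1_eq_sum)
      ultimately show "v \<in> {v \<in> space D. p \<le> (\<Sum>k\<in>UNIV. v $ k)}"
        using eps_pos \<open>v \<in> band i\<close> unfolding p_def band_def by (simp add: divide_le_eq mult.commute)
    qed
  qed
  hence "measure D (band i) \<le> measure D {v \<in> space D. p \<le> (\<Sum>k\<in>UNIV. v $ k)}"
    using finite_measure_D sets_D by (intro finite_measure.finite_measure_mono_AE) auto
  also have "\<dots> \<le> B / p" using measure_value_ge_le_BRev[OF BRev p_pos] .
  finally have measure_le: "measure D (band i) \<le> B / p" .
  have B: "0 \<le> B" using BRev BRev_nonneg[of D] by simp
  have "2 * floor_price i * measure D (band i) \<le> 4 * gap X Q i * (B / p)"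
    by (rule mult_mono)
      (use gap_ge_floor_price[OF i] measure_le floor_price_pos[of i] in auto)
  thus ?thesis unfolding p_def by (simp add: field_simps)
qed

lemma positive_price_in_band:
  "AE v in D. 0 < price v \<longrightarrow> (\<exists>i. Suc i \<in> idx N \<and> v \<in> band (Suc i))"
  using AE_supp
proof eventually_elim
  case (elim v)
  show ?case
  proof
    assume "0 < price v"
    hence nonnull: "(fst (sel v), price v) \<noteq> (0, 0)" by auto
    have "(fst (sel v), price v) \<in> M"
      using selection supp_nonneg[OF elim] unfolding is_selection_def by simp
    then obtain m where "price_floor c a m \<le> price v" "price v < 2 * price_floor c a m"
      by (rule option_price_in_band[OF c_pos parity _ nonnull])
    hence v_bucket: "v \<in> bucket c a D sel (Suc m)" unfolding bucket_Suc using elim by simp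
    hence "Suc m \<in> {j. 1 \<le> j \<and> bucket c a D sel j \<noteq> {}}" by auto
    hence "Suc m \<in> e ` idx N" by (simp only: e_image)
    then obtain i where i: "i \<in> idx N" "e i = Suc m" by (metis imageE)
    obtain i' where "i = Suc i'" using idx_ge_1[OF i(1)] by (cases i) auto
    moreover have "v \<in> band i" using v_bucket bucket_eq_band[OF i(1)] i(2) by simp
    ultimately show "\<exists>i. Suc i \<in> idx N \<and> v \<in> band (Suc i)" using i(1) by blast
  qed
qed

lemma Rev_le_MenuGap:
  assumes "BRev D < \<infinity>"
  shows "Rev D sel / (4 * (1 + ereal \<epsilon>) * BRev D) \<le> MenuGap X Q N"
proof -
  obtain B where BRev: "BRev D = ereal B"
    using assms BRev_nonneg[of D] by (cases "BRev D") auto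
  have B: "0 \<le> B" using BRev BRev_nonneg[of D] by simp
  define K where "K = 4 * (1 + \<epsilon>) * B"
  have K: "0 \<le> K" unfolding K_def using B eps_pos by simp
  define S where "S i = (if Suc i \<in> idx N then band (Suc i) else {})" for i
  define t where "t i = (if Suc i \<in> idx N then ennreal (gap X Q (Suc i) / norm1 (X (Suc i))) else 0)" for i
  have "(\<integral>\<^sup>+v. ennreal (price v) \<partial>D) \<le> (\<Sum>i. ennreal (2 * floor_price (Suc i)) * emeasure D (S i))"
    using price_measurable positive_price_in_band
    by (intro nn_integral_le_suminf_cover) (auto simp: S_def band_def split: if_splits)
  also have "\<dots> \<le> (\<Sum>i. ennreal K * t i)"
  proof (intro suminf_le summableI)
    fix i
    show "ennreal (2 * floor_price (Suc i)) * emeasure D (S i) \<le> ennreal K * t i"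
    proof (cases "Suc i \<in> idx N")
      case True
      have "ennreal (2 * floor_price (Suc i)) * emeasure D (band (Suc i))
          = ennreal (2 * floor_price (Suc i) * measure D (band (Suc i)))"
        using floor_price_pos[of "Suc i"]
        by (simp add: finite_measure.emeasure_eq_measure[OF finite_measure_D] ennreal_mult)
      also have "\<dots> \<le> ennreal (K * (gap X Q (Suc i) / norm1 (X (Suc i))))"
        using band_revenue_le[OF BRev True] unfolding K_def by (rule ennreal_leI)
      also have "\<dots> = ennreal K * t i"
        unfolding t_def if_P[OF True] using K gap_ratio_nonneg[OF True] by (rule ennreal_mult)
      finally show ?thesis by (simp add: S_def True)
    qed (simp add: S_def)
  qed
  also have "\<dots> = ennreal K * (\<Sum>i. t i)"
    by (rule ennreal_suminf_cmult)
  finally have "Rev D sel / (4 * (1 + ereal \<epsilon>) * ereal B) \<le> enn2ereal (\<Sum>i. t i)"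
    using B eps_pos unfolding Rev_def K_def by (intro ereal_divide_le_of_ennreal)
  thus ?thesis
    using MenuGap_eq_suminf_ennreal[OF gap_ratio_nonneg] BRev unfolding t_def by simp
qed

end

theorem proposition4p6:
  fixes c \<epsilon> :: real
    and D :: "(real ^ 'k) measure"
    and M :: "((real ^ 'k) \<times> real) set"
    and sel :: "real ^ 'k \<Rightarrow> (real ^ 'k) \<times> real"
    and X Q :: "nat \<Rightarrow> real ^ 'k"
    and N :: enat
  assumes "c > 0" and "\<epsilon> > 0"
    and "nonneg_distribution D"
    and "BRev D < \<infinity>"
    and "is_mechanism M"
    and "c_expensive c M"
    and "oddly_priced c M \<or> evenly_priced c M"
    and "is_selection M {v. \<forall>i. 0 \<le> v $ i} sel"
    and "(\<lambda>v. snd (sel v)) \<in> borel_measurable D"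
    and "representative c \<epsilon> D M sel X Q N"
  shows "MenuGap X Q N \<ge> Rev D sel / (4 * (1 + ereal \<epsilon>) * BRev D)"
proof -
  \<comment> \<open>\<open>c_expensive\<close> and the parity hypothesis are unused: \<open>representative\<close> already fixes a
    parity \<open>a\<close> for which \<open>M\<close> is oddly or evenly priced.\<close>
  obtain a e where "representative_sequence c \<epsilon> D M sel X Q N a e"
    using assms(10) assms(1-3,5,8,9) unfolding representative_def representative_sequence_def by blast
  thus ?thesis using representative_sequence.Rev_le_MenuGap assms(4) by blast
qed

end
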